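(* Let $\mathcal G=(V_{\min},V_{\max},E,w,\lambda)$ be a discounted payoff game and $\{\alpha_e>0\mid e\in E\}$ positive numbers such that $\mathcal G$ is improving with respect to the adjusted objectives $f'_\sigma$. Let $\sigma$ be a joint strategy and $\nu$ a basis valuation of $H$ minimising $f'_\sigma$ over all solutions of $H$, with $f'_\sigma(\nu)\neq0$, and assume there are no local improvements of $\sigma$ for $\nu$, i.e. $\mathsf{offset}'(\nu,(v,v'))\ge\mathsf{offset}'(\nu,(v,\sigma(v)))$ for all $(v,v')\in E$. Let $E'$ be a given set of edges with $E_\nu\subseteq E'\subseteq S^\sigma_\nu$ containing an outgoing edge of every vertex. Then there exist a neighbouring valuation $\nu''$ of $\nu$ and a joint strategy $\sigma'$ with $f'_{\sigma'}(\nu'')<f'_\sigma(\nu)$; such a $\sigma'$ is better than $\sigma$ (with respect to the adjusted objectives), and it can be chosen such that $(v,\sigma'(v))\in E'$ for all $v\in V$.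
   Context: A discounted payoff game is a tuple $\mathcal G=(V_{\min},V_{\max},E,w,\lambda)$ with $V=V_{\min}\cup V_{\max}$ finite (disjoint union of Min and Max vertices), $E\subseteq V\times V$ with every vertex having an outgoing edge, $w:E\to\mathbb R$, $\lambda:E\to[0,1)$. A joint strategy is a map $\sigma:V\to V$ with $(v,\sigma(v))\in E$. $H$ is the system of inequations over $x\in\mathbb R^V$ containing, for each edge $e=(v,v')$, $x(v)\ge w_e+\lambda_e x(v')$ if $v\in V_{\max}$ and $x(v)\le w_e+\lambda_e x(v')$ if $v\in V_{\min}$. A basis of $H$ is a set of $|V|$ inequations of $H$ whose equality versions have a unique common solution; if it satisfies $H$ it is the basis valuation of that basis. $\mathsf{offset}(x,(v,v'))=x(v)-(w_{(v,v')}+\lambda_{(v,v')}x(v'))$ if $v\in V_{\max}$, and $(w_{(v,v')}+\lambda_{(v,v')}x(v'))-x(v)$ otherwise; the adjusted offset is $\mathsf{offset}'(x,e)=\alpha_e\,\mathsf{offset}(x,e)$ and the adjusted objective is $f'_\sigma(x)=\sum_{v\in V}\mathsf{offset}'(x,(v,\sigma(v)))$. $S^\sigma_\nu=\{(v,v')\in E\mid\mathsf{offset}'(\nu,(v,v'))=\mathsf{offset}'(\nu,(v,\sigma(v)))\}$ and $E_\nu=\{(v,v')\in E\mid\mathsf{offset}(\nu,(v,v'))=0\}$. $\sigma'$ is better than $\sigma$ iff $\min\{f'_{\sigma'}(x)\mid x\text{ solves }H\}<\min\{f'_\sigma(x)\mid x\text{ solves }H\}$. The game is sharp if every basis valuation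 satisfies exactly $|V|$ inequations of $H$ with equality. A sharp game is improving (with respect to $f'$) if for every joint strategy $\sigma$ and every basis valuation $\nu$ not minimising $f'_\sigma$ over the solutions of $H$, there is a basis obtained from the basis of $\nu$ by exchanging exactly one inequation whose basis valuation $\nu'$ satisfies $f'_\sigma(\nu')<f'_\sigma(\nu)$. A neighbouring valuation of $\nu$ is the basis valuation of a basis obtained from the basis of $\nu$ by exchanging exactly one inequation. *)

theory Defs
  imports Complex_Main
begin

text \<open>The vertex set V is the (finite) universe of the
  vertex type 'v; the Min and Max vertices partition it.\<close>

record 'v dpg =
  vmin :: "'v set"
  vmax :: "'v set"
  edges :: "('v \<times> 'v) set"
  wt :: "'v \<times> 'v \<Rightarrow> real"
  disc :: "'v \<times> 'v \<Rightarrow> real"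

definition is_dpg :: "('v::finite) dpg \<Rightarrow> bool" where
  "is_dpg G \<longleftrightarrow> vmin G \<inter> vmax G = {} \<and> vmin G \<union> vmax G = UNIV
     \<and> (\<forall>v. \<exists>v'. (v, v') \<in> edges G)
     \<and> (\<forall>e \<in> edges G. 0 \<le> disc G e \<and> disc G e < 1)"

definition joint_strategy :: "'v dpg \<Rightarrow> ('v \<Rightarrow> 'v) \<Rightarrow> bool" where
  "joint_strategy G \<sigma> \<longleftrightarrow> (\<forall>v. (v, \<sigma> v) \<in> edges G)"

definition eq_holds :: "'v dpg \<Rightarrow> ('v \<times> 'v) \<Rightarrow> ('v \<Rightarrow> real) \<Rightarrow> bool" where
  "eq_holds G e x \<longleftrightarrow> x (fst e) = wt G e + disc G e * x (snd e)"

definition ineq_holds :: "'v dpg \<Rightarrow> ('v \<times> 'v) \<Rightarrow> ('v \<Rightarrow> real) \<Rightarrow> bool" where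
  "ineq_holds G e x \<longleftrightarrow>
     (if fst e \<in> vmax G then x (fst e) \<ge> wt G e + disc G e * x (snd e)
      else x (fst e) \<le> wt G e + disc G e * x (snd e))"

definition solves_H :: "'v dpg \<Rightarrow> ('v \<Rightarrow> real) \<Rightarrow> bool" where
  "solves_H G x \<longleftrightarrow> (\<forall>e \<in> edges G. ineq_holds G e x)"

definition is_basis :: "('v::finite) dpg \<Rightarrow> ('v \<times> 'v) set \<Rightarrow> bool" where
  "is_basis G B \<longleftrightarrow> B \<subseteq> edges G \<and> card B = card (UNIV :: 'v set)
     \<and> (\<exists>!x. \<forall>e \<in> B. eq_holds G e x)"

definition basis_val :: "('v::finite) dpg \<Rightarrow> ('v \<times> 'v) set \<Rightarrow> ('v \<Rightarrow> real) \<Rightarrow> bool" where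
  "basis_val G B x \<longleftrightarrow> is_basis G B \<and> (\<forall>e \<in> B. eq_holds G e x) \<and> solves_H G x"

definition is_basis_valuation :: "('v::finite) dpg \<Rightarrow> ('v \<Rightarrow> real) \<Rightarrow> bool" where
  "is_basis_valuation G x \<longleftrightarrow> (\<exists>B. basis_val G B x)"

definition offset :: "'v dpg \<Rightarrow> ('v \<Rightarrow> real) \<Rightarrow> ('v \<times> 'v) \<Rightarrow> real" where
  "offset G x e =
     (if fst e \<in> vmax G then x (fst e) - (wt G e + disc G e * x (snd e))
      else (wt G e + disc G e * x (snd e)) - x (fst e))"

definition offset' :: "'v dpg \<Rightarrow> ('v \<times> 'v \<Rightarrow> real) \<Rightarrow> ('v \<Rightarrow> real) \<Rightarrow> ('v \<times> 'v) \<Rightarrow> real" where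
  "offset' G \<alpha> x e = \<alpha> e * offset G x e"

definition f' :: "('v::finite) dpg \<Rightarrow> ('v \<times> 'v \<Rightarrow> real) \<Rightarrow> ('v \<Rightarrow> 'v) \<Rightarrow> ('v \<Rightarrow> real) \<Rightarrow> real" where
  "f' G \<alpha> \<sigma> x = (\<Sum>v\<in>UNIV. offset' G \<alpha> x (v, \<sigma> v))"

definition S_set :: "'v dpg \<Rightarrow> ('v \<times> 'v \<Rightarrow> real) \<Rightarrow> ('v \<Rightarrow> 'v) \<Rightarrow> ('v \<Rightarrow> real) \<Rightarrow> ('v \<times> 'v) set" where
  "S_set G \<alpha> \<sigma> \<nu> = {(v, v') \<in> edges G. offset' G \<alpha> \<nu> (v, v') = offset' G \<alpha> \<nu> (v, \<sigma> v)}"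

definition E_tight :: "'v dpg \<Rightarrow> ('v \<Rightarrow> real) \<Rightarrow> ('v \<times> 'v) set" where
  "E_tight G \<nu> = {e \<in> edges G. offset G \<nu> e = 0}"

definition minimises :: "('v::finite) dpg \<Rightarrow> ('v \<times> 'v \<Rightarrow> real) \<Rightarrow> ('v \<Rightarrow> 'v) \<Rightarrow> ('v \<Rightarrow> real) \<Rightarrow> bool" where
  "minimises G \<alpha> \<sigma> x \<longleftrightarrow> solves_H G x \<and> (\<forall>y. solves_H G y \<longrightarrow> f' G \<alpha> \<sigma> x \<le> f' G \<alpha> \<sigma> y)"

text \<open>min { f'_sigma(x) | x solves H }, rendered as the infimum.\<close>
definition min_f' :: "('v::finite) dpg \<Rightarrow> ('v \<times> 'v \<Rightarrow> real) \<Rightarrow> ('v \<Rightarrow> 'v) \<Rightarrow> real" where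
  "min_f' G \<alpha> \<sigma> = Inf {f' G \<alpha> \<sigma> x | x. solves_H G x}"

definition better :: "('v::finite) dpg \<Rightarrow> ('v \<times> 'v \<Rightarrow> real) \<Rightarrow> ('v \<Rightarrow> 'v) \<Rightarrow> ('v \<Rightarrow> 'v) \<Rightarrow> bool" where
  "better G \<alpha> \<sigma>' \<sigma> \<longleftrightarrow> min_f' G \<alpha> \<sigma>' < min_f' G \<alpha> \<sigma>"

definition sharp :: "('v::finite) dpg \<Rightarrow> bool" where
  "sharp G \<longleftrightarrow> (\<forall>x. is_basis_valuation G x \<longrightarrow> card {e \<in> edges G. eq_holds G e x} = card (UNIV :: 'v set))"

definition neighbouring :: "('v::finite) dpg \<Rightarrow> ('v \<Rightarrow> real) \<Rightarrow> ('v \<Rightarrow> real) \<Rightarrow> bool" where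
  "neighbouring G \<nu> \<nu>'' \<longleftrightarrow> (\<exists>B e e'. basis_val G B \<nu> \<and> e \<in> B \<and> e' \<in> edges G \<and> e' \<notin> B
      \<and> basis_val G (insert e' (B - {e})) \<nu>'')"

definition improving :: "('v::finite) dpg \<Rightarrow> ('v \<times> 'v \<Rightarrow> real) \<Rightarrow> bool" where
  "improving G \<alpha> \<longleftrightarrow> sharp G \<and>
     (\<forall>\<sigma> \<nu>. joint_strategy G \<sigma> \<and> is_basis_valuation G \<nu> \<and> \<not> minimises G \<alpha> \<sigma> \<nu>
        \<longrightarrow> (\<exists>\<nu>''. neighbouring G \<nu> \<nu>'' \<and> f' G \<alpha> \<sigma> \<nu>'' < f' G \<alpha> \<sigma> \<nu>))"

end

theory Submission
  imports Defs
begin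

text \<open>Restricted to the edges E', the game still has a positional equilibrium: the Bellman
  operator of the subgame is a contraction, and at its fixed point z every vertex v has an
  optimal edge (v, \<sigma>' v) \<in> E' that is tight, while all inequations of E' hold.  Hence
  f' \<sigma>' z = 0, whereas f' \<sigma>' \<nu> = f' \<sigma> \<nu> > 0 because E' \<subseteq> S_set \<sigma> \<nu>.  As E' contains the
  edges tight at \<nu>, a small step from \<nu> towards z stays feasible and, f' \<sigma>' being affine,
  decreases f' \<sigma>'; so \<nu> does not minimise f' \<sigma>'.  Improvingness then yields a neighbour \<nu>''
  with f' \<sigma>' \<nu>'' < f' \<sigma>' \<nu> = f' \<sigma> \<nu>, which is the minimum for \<sigma>, so \<sigma>' is better than \<sigma>.\<close>

lemma Max_image_diff_le:
  fixes f g :: "'a \<Rightarrow> real"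
  assumes "finite A" "A \<noteq> {}" "\<And>a. a \<in> A \<Longrightarrow> \<bar>f a - g a\<bar> \<le> d"
  shows "\<bar>Max (f ` A) - Max (g ` A)\<bar> \<le> d"
proof -
  have "Max (p ` A) \<le> Max (q ` A) + d"
    if pq: "\<And>a. a \<in> A \<Longrightarrow> p a \<le> q a + d" for p q :: "'a \<Rightarrow> real"
  proof -
    have "p a \<le> Max (q ` A) + d" if "a \<in> A" for a
      using pq[OF that] Max_ge[of "q ` A" "q a"] assms(1) that by (simp del: Max_ge)
    then show ?thesis using assms(1,2) by simp
  qed
  from this[of f g] this[of g f] show ?thesis using assms(3) by (force simp: abs_le_iff)
qed

lemma Min_image_diff_le:
  fixes f g :: "'a \<Rightarrow> real"
  assumes "finite A" "A \<noteq> {}" "\<And>a. a \<in> A \<Longrightarrow> \<bar>f a - g a\<bar> \<le> d"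
  shows "\<bar>Min (f ` A) - Min (g ` A)\<bar> \<le> d"
proof -
  have "Min (p ` A) - d \<le> Min (q ` A)"
    if pq: "\<And>a. a \<in> A \<Longrightarrow> p a \<le> q a + d" for p q :: "'a \<Rightarrow> real"
  proof -
    have "Min (p ` A) - d \<le> q a" if "a \<in> A" for a
      using pq[OF that] Min_le[of "p ` A" "p a"] assms(1) that by (simp del: Min_le)
    then show ?thesis using assms(1,2) by simp
  qed
  from this[of f g] this[of g f] show ?thesis using assms(3) by (force simp: abs_le_iff)
qed

text \<open>Banach's theorem for the sup distance, proved by hand: Banach_fix needs a metric-space
  type, and 'a \<Rightarrow> real has no instance with this distance.\<close>

lemma contraction_has_fixpoint:
  fixes \<Phi> :: "('a::finite \<Rightarrow> real) \<Rightarrow> 'a \<Rightarrow> real"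
  assumes c: "0 \<le> c" "c < 1"
    and contr: "\<And>x y d v. (\<And>u. \<bar>x u - y u\<bar> \<le> d) \<Longrightarrow> \<bar>\<Phi> x v - \<Phi> y v\<bar> \<le> c * d"
  shows "\<exists>x. \<Phi> x = x"
proof -
  have coord_le_sum: "\<bar>x u - y u\<bar> \<le> (\<Sum>u\<in>UNIV. \<bar>x u - y u\<bar>)" for x y :: "'a \<Rightarrow> real" and u
    by (rule member_le_sum) auto
  define s where "s k = (\<Phi> ^^ k) (\<lambda>_. 0)" for k
  have s_Suc: "s (Suc k) = \<Phi> (s k)" for k by (simp add: s_def)
  define K where "K = (\<Sum>u\<in>UNIV. \<bar>s (Suc 0) u - s 0 u\<bar>)"
  have step: "\<bar>s (Suc k) u - s k u\<bar> \<le> c ^ k * K" for k u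
  proof (induction k arbitrary: u)
    case 0
    show ?case unfolding K_def by (simp add: coord_le_sum)
  next
    case (Suc k)
    then show ?case unfolding s_Suc[of "Suc k"] s_Suc[of k] by (simp add: contr mult.assoc)
  qed
  have "convergent (\<lambda>n. s n u)" for u
  proof -
    have "summable (\<lambda>k. c ^ k * K)" using c by (simp add: summable_mult2)
    then have "summable (\<lambda>k. s (Suc k) u - s k u)"
      by (rule summable_comparison_test'[where N = 0]) (use step in simp)
    then have "convergent (\<lambda>n. \<Sum>k<n. s (Suc k) u - s k u)"
      by (simp add: summable_iff_convergent)
    then show ?thesis
      by (simp add: sum_lessThan_telescope[of "\<lambda>k. s k u"] convergent_diff_const_right_iff)
  qed
  then obtain L where L: "\<And>u. (\<lambda>n. s n u) \<longlonglongrightarrow> L u"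
    unfolding convergent_def by metis
  have "\<Phi> L v = L v" for v
  proof (rule LIMSEQ_unique)
    show "(\<lambda>n. \<Phi> (s n) v) \<longlonglongrightarrow> L v"
      using LIMSEQ_Suc[OF L[of v]] by (simp add: s_Suc)
    have "(\<lambda>n. \<Sum>u\<in>UNIV. \<bar>s n u - L u\<bar>) \<longlonglongrightarrow> (\<Sum>u\<in>UNIV. \<bar>L u - L u\<bar>)"
      by (intro tendsto_intros L)
    then have dist_lim: "(\<lambda>n. \<Sum>u\<in>UNIV. \<bar>s n u - L u\<bar>) \<longlonglongrightarrow> 0"
      by simp
    have bound: "\<bar>\<Phi> (s n) v - \<Phi> L v\<bar> \<le> (\<Sum>u\<in>UNIV. \<bar>s n u - L u\<bar>) * c" for n
      using contr[OF coord_le_sum] by (simp only: mult.commute)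
    have "(\<lambda>n. \<Phi> (s n) v - \<Phi> L v) \<longlonglongrightarrow> 0"
      by (intro tendsto_0_le[OF dist_lim, where K = c] always_eventually allI) (simp add: bound)
    then show "(\<lambda>n. \<Phi> (s n) v) \<longlonglongrightarrow> \<Phi> L v" by (rule LIM_zero_cancel)
  qed
  then show ?thesis by blast
qed

definition edge_value :: "'v dpg \<Rightarrow> ('v \<Rightarrow> real) \<Rightarrow> 'v \<times> 'v \<Rightarrow> real" where
  "edge_value G x e = wt G e + disc G e * x (snd e)"

definition bellman :: "'v dpg \<Rightarrow> ('v \<times> 'v) set \<Rightarrow> ('v \<Rightarrow> real) \<Rightarrow> 'v \<Rightarrow> real" where
  "bellman G D x v =
     (if v \<in> vmax G then Max (edge_value G x ` {e \<in> D. fst e = v})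
      else Min (edge_value G x ` {e \<in> D. fst e = v}))"

lemma offset_edge_value:
  "offset G x e =
     (if fst e \<in> vmax G then x (fst e) - edge_value G x e else edge_value G x e - x (fst e))"
  unfolding offset_def edge_value_def ..

lemma bellman_contraction:
  fixes G :: "('v::finite) dpg"
  assumes disc: "\<forall>e \<in> D. 0 \<le> disc G e \<and> disc G e \<le> c"
    and total: "\<forall>v. \<exists>v'. (v, v') \<in> D"
    and close: "\<And>u. \<bar>x u - y u\<bar> \<le> d"
  shows "\<bar>bellman G D x v - bellman G D y v\<bar> \<le> c * d"
proof -
  let ?A = "{e \<in> D. fst e = v}"
  have "?A \<noteq> {}" using total by force
  moreover have "\<bar>edge_value G x e - edge_value G y e\<bar> \<le> c * d" if "e \<in> ?A" for e
  proof -
    have "\<bar>edge_value G x e - edge_value G y e\<bar> = disc G e * \<bar>x (snd e) - y (snd e)\<bar>"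
      using disc that by (simp add: edge_value_def abs_mult flip: right_diff_distrib)
    also have "\<dots> \<le> c * d"
      using disc that close[of "snd e"] by (intro mult_mono) auto
    finally show ?thesis .
  qed
  ultimately show ?thesis
    unfolding bellman_def
    using Max_image_diff_le[of ?A] Min_image_diff_le[of ?A] by simp
qed

lemma bellman_has_fixpoint:
  fixes G :: "('v::finite) dpg"
  assumes disc: "\<forall>e \<in> D. 0 \<le> disc G e \<and> disc G e < 1"
    and total: "\<forall>v. \<exists>v'. (v, v') \<in> D"
  shows "\<exists>x. bellman G D x = x"
proof -
  define c where "c = Max (disc G ` D)"
  have "D \<noteq> {}" using total by auto
  then have "c \<in> disc G ` D" unfolding c_def by (intro Max_in) auto
  then have "0 \<le> c" "c < 1" using disc by auto
  moreover have "\<forall>e \<in> D. 0 \<le> disc G e \<and> disc G e \<le> c"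
    using disc by (auto simp: c_def)
  ultimately show ?thesis
    using contraction_has_fixpoint bellman_contraction[OF _ total] by metis
qed

lemma bellman_fixpoint_offset_nonneg:
  fixes G :: "('v::finite) dpg"
  assumes "bellman G D x = x" and "e \<in> D"
  shows "0 \<le> offset G x e"
proof -
  have "x (fst e) = bellman G D x (fst e)" using assms(1) by simp
  moreover have "e \<in> {e' \<in> D. fst e' = fst e}" using assms(2) by simp
  ultimately show ?thesis
    unfolding offset_edge_value bellman_def by (auto intro: Max_ge Min_le)
qed

lemma bellman_fixpoint_tight_edge:
  fixes G :: "('v::finite) dpg"
  assumes "bellman G D x = x" and total: "\<forall>v. \<exists>v'. (v, v') \<in> D"
  shows "\<exists>v'. (v, v') \<in> D \<and> offset G x (v, v') = 0"
proof -
  let ?A = "{e \<in> D. fst e = v}"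
  have "?A \<noteq> {}" using total by force
  then have "bellman G D x v \<in> edge_value G x ` ?A"
    unfolding bellman_def by (auto intro!: Max_in Min_in)
  then obtain v' where "(v, v') \<in> D" "x v = edge_value G x (v, v')"
    using assms(1) by auto
  then show ?thesis unfolding offset_edge_value by auto
qed

lemma subgame_equilibrium_exists:
  fixes G :: "('v::finite) dpg"
  assumes "\<forall>e \<in> D. 0 \<le> disc G e \<and> disc G e < 1"
    and total: "\<forall>v. \<exists>v'. (v, v') \<in> D"
  obtains \<tau> z where "\<And>v. (v, \<tau> v) \<in> D" and "\<And>v. offset G z (v, \<tau> v) = 0"
    and "\<And>e. e \<in> D \<Longrightarrow> 0 \<le> offset G z e"
proof -
  obtain z where z: "bellman G D z = z" using bellman_has_fixpoint[OF assms] by blast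
  then obtain \<tau> where "\<And>v. (v, \<tau> v) \<in> D \<and> offset G z (v, \<tau> v) = 0"
    using bellman_fixpoint_tight_edge[OF z total] by metis
  with bellman_fixpoint_offset_nonneg[OF z] show ?thesis using that by blast
qed

lemma ineq_holds_iff_offset_nonneg: "ineq_holds G e x \<longleftrightarrow> 0 \<le> offset G x e"
  unfolding ineq_holds_def offset_def by auto

lemma offset_convex_combination:
  "offset G (\<lambda>u. (1 - t) * x u + t * z u) e = (1 - t) * offset G x e + t * offset G z e"
  unfolding offset_def by (simp add: algebra_simps)

lemma f'_convex_combination:
  "f' G \<alpha> \<tau> (\<lambda>u. (1 - t) * x u + t * z u) = (1 - t) * f' G \<alpha> \<tau> x + t * f' G \<alpha> \<tau> z"
proof -
  have "f' G \<alpha> \<tau> (\<lambda>u. (1 - t) * x u + t * z u)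
      = (\<Sum>v\<in>UNIV. (1 - t) * offset' G \<alpha> x (v, \<tau> v) + t * offset' G \<alpha> z (v, \<tau> v))"
    unfolding f'_def offset'_def offset_convex_combination by (simp add: algebra_simps)
  then show ?thesis by (simp add: f'_def sum.distrib sum_distrib_left)
qed

lemma f'_nonneg:
  assumes "joint_strategy G \<tau>" and "\<forall>e \<in> edges G. 0 \<le> \<alpha> e" and "solves_H G x"
  shows "0 \<le> f' G \<alpha> \<tau> x"
  unfolding f'_def offset'_def
proof (rule sum_nonneg)
  fix v
  have "(v, \<tau> v) \<in> edges G" using assms(1) by (simp add: joint_strategy_def)
  then show "0 \<le> \<alpha> (v, \<tau> v) * offset G x (v, \<tau> v)"
    using assms(2,3) by (simp add: solves_H_def ineq_holds_iff_offset_nonneg)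
qed

text \<open>The step size t is chosen so that the slack of every non-tight inequation, which is at
  least m, absorbs a violation of at most K.\<close>

lemma solves_H_step_towards_tight_feasible:
  fixes G :: "('v::finite) dpg"
  assumes sol: "solves_H G x" and tight: "\<forall>e \<in> E_tight G x. 0 \<le> offset G z e"
  obtains t where "0 < t" and "t \<le> 1" and "solves_H G (\<lambda>u. (1 - t) * x u + t * z u)"
proof -
  define m where "m = Min (insert 1 (offset G x ` {e \<in> edges G. 0 < offset G x e}))"
  define K where "K = (\<Sum>e \<in> edges G. \<bar>offset G z e\<bar>)"
  define t where "t = m / (m + K)"
  have "m \<in> insert 1 (offset G x ` {e \<in> edges G. 0 < offset G x e})"
    unfolding m_def by (intro Min_in) auto
  then have "0 < m" by auto
  have "0 \<le> K" unfolding K_def by (simp add: sum_nonneg)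
  have "0 < t" "t \<le> 1" using \<open>0 < m\<close> \<open>0 \<le> K\<close> by (simp_all add: t_def)
  have balance: "(1 - t) * m = t * K"
    using \<open>0 < m\<close> \<open>0 \<le> K\<close> by (simp add: t_def field_simps)
  have "0 \<le> (1 - t) * offset G x e + t * offset G z e" if e: "e \<in> edges G" for e
  proof (cases "0 < offset G x e")
    case True
    then have "m \<le> offset G x e" unfolding m_def using e by (intro Min_le) auto
    then have "t * K \<le> (1 - t) * offset G x e"
      using \<open>t \<le> 1\<close> balance by (metis diff_ge_0_iff_ge mult_left_mono)
    moreover have "\<bar>offset G z e\<bar> \<le> K"
      unfolding K_def using e by (intro member_le_sum) auto
    then have "- K \<le> offset G z e" by linarith
    then have "t * - K \<le> t * offset G z e" using \<open>0 < t\<close> by (intro mult_left_mono) auto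
    ultimately show ?thesis by linarith
  next
    case False
    then have "offset G x e = 0"
      using sol e by (auto simp: solves_H_def ineq_holds_iff_offset_nonneg)
    then have "0 \<le> offset G z e" using tight e unfolding E_tight_def by blast
    then show ?thesis using \<open>offset G x e = 0\<close> \<open>0 < t\<close> by simp
  qed
  then have "solves_H G (\<lambda>u. (1 - t) * x u + t * z u)"
    by (simp add: solves_H_def ineq_holds_iff_offset_nonneg offset_convex_combination)
  with \<open>0 < t\<close> \<open>t \<le> 1\<close> that show ?thesis by blast
qed

lemma minimises_le_tight_feasible:
  fixes G :: "('v::finite) dpg"
  assumes min: "minimises G \<alpha> \<tau> x" and tight: "\<forall>e \<in> E_tight G x. 0 \<le> offset G z e"
  shows "f' G \<alpha> \<tau> x \<le> f' G \<alpha> \<tau> z"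
proof -
  obtain t where "0 < t" "t \<le> 1" and sol: "solves_H G (\<lambda>u. (1 - t) * x u + t * z u)"
    using min tight solves_H_step_towards_tight_feasible by (metis minimises_def)
  have "f' G \<alpha> \<tau> x \<le> (1 - t) * f' G \<alpha> \<tau> x + t * f' G \<alpha> \<tau> z"
    using min sol by (simp add: minimises_def flip: f'_convex_combination)
  then have "t * f' G \<alpha> \<tau> x \<le> t * f' G \<alpha> \<tau> z" by (simp add: algebra_simps)
  with \<open>0 < t\<close> show ?thesis by simp
qed

lemma min_f'_eq:
  assumes "minimises G \<alpha> \<tau> x"
  shows "min_f' G \<alpha> \<tau> = f' G \<alpha> \<tau> x"
  unfolding min_f'_def using assms by (intro cInf_eq_minimum) (auto simp: minimises_def)

lemma min_f'_le:
  assumes "joint_strategy G \<tau>" and "\<forall>e \<in> edges G. 0 \<le> \<alpha> e" and "solves_H G x"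
  shows "min_f' G \<alpha> \<tau> \<le> f' G \<alpha> \<tau> x"
proof -
  have "bdd_below {f' G \<alpha> \<tau> y |y. solves_H G y}"
    using f'_nonneg[OF assms(1,2)] by (intro bdd_belowI[of _ 0]) auto
  then show ?thesis unfolding min_f'_def using assms(3) by (intro cInf_lower) auto
qed

theorem theorem4p8:
  fixes G :: "('v::finite) dpg" and \<alpha> :: "'v \<times> 'v \<Rightarrow> real"
    and \<sigma> :: "'v \<Rightarrow> 'v" and \<nu> :: "'v \<Rightarrow> real" and E' :: "('v \<times> 'v) set"
  assumes "is_dpg G"
    and "\<forall>e \<in> edges G. \<alpha> e > 0"
    and "improving G \<alpha>"
    and "joint_strategy G \<sigma>"
    and "is_basis_valuation G \<nu>"
    and "minimises G \<alpha> \<sigma> \<nu>"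
    and "f' G \<alpha> \<sigma> \<nu> \<noteq> 0"
    and "\<forall>(v, v') \<in> edges G. offset' G \<alpha> \<nu> (v, v') \<ge> offset' G \<alpha> \<nu> (v, \<sigma> v)"
    and "E_tight G \<nu> \<subseteq> E'" and "E' \<subseteq> S_set G \<alpha> \<sigma> \<nu>"
    and "\<forall>v. \<exists>v'. (v, v') \<in> E'"
  shows "\<exists>\<nu>'' \<sigma>'. neighbouring G \<nu> \<nu>'' \<and> joint_strategy G \<sigma>'
           \<and> f' G \<alpha> \<sigma>' \<nu>'' < f' G \<alpha> \<sigma> \<nu> \<and> better G \<alpha> \<sigma>' \<sigma>
           \<and> (\<forall>v. (v, \<sigma>' v) \<in> E')"
proof -
  have \<alpha>_nonneg: "\<forall>e \<in> edges G. 0 \<le> \<alpha> e" using assms(2) by (simp add: less_imp_le)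
  have E'_edges: "E' \<subseteq> edges G" using assms(10) by (auto simp: S_set_def)
  then have "\<forall>e \<in> E'. 0 \<le> disc G e \<and> disc G e < 1"
    using assms(1) by (auto simp: is_dpg_def)
  then obtain \<sigma>' z where \<sigma>'_E': "\<And>v. (v, \<sigma>' v) \<in> E'" and "\<And>v. offset G z (v, \<sigma>' v) = 0"
    and z_E': "\<And>e. e \<in> E' \<Longrightarrow> 0 \<le> offset G z e"
    using subgame_equilibrium_exists assms(11) by metis
  then have "f' G \<alpha> \<sigma>' z = 0" by (simp add: f'_def offset'_def)
  have js: "joint_strategy G \<sigma>'" using \<sigma>'_E' E'_edges by (auto simp: joint_strategy_def)
  have same: "f' G \<alpha> \<sigma>' \<nu> = f' G \<alpha> \<sigma> \<nu>"
    unfolding f'_def using \<sigma>'_E' assms(10) by (intro sum.cong) (auto simp: S_set_def)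
  have sol: "solves_H G \<nu>" using assms(6) by (simp add: minimises_def)
  have "0 < f' G \<alpha> \<sigma>' \<nu>" using f'_nonneg[OF assms(4) \<alpha>_nonneg sol] assms(7) same by linarith
  then have "\<not> minimises G \<alpha> \<sigma>' \<nu>"
    using minimises_le_tight_feasible[of G \<alpha> \<sigma>' \<nu> z] \<open>f' G \<alpha> \<sigma>' z = 0\<close> z_E' assms(9)
    by fastforce
  then obtain \<nu>'' where nb: "neighbouring G \<nu> \<nu>''" and lt: "f' G \<alpha> \<sigma>' \<nu>'' < f' G \<alpha> \<sigma>' \<nu>"
    using assms(3,5) js unfolding improving_def by blast
  have "solves_H G \<nu>''" using nb by (auto simp: neighbouring_def basis_val_def)
  then have "min_f' G \<alpha> \<sigma>' < min_f' G \<alpha> \<sigma>"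
    using min_f'_le[OF js \<alpha>_nonneg] min_f'_eq[OF assms(6)] lt same by fastforce
  then show ?thesis using nb js lt same \<sigma>'_E' by (auto simp: better_def)
qed

end
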